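(* Let $T>0$ and consider single-stage allocations $(T(1),T(0))$ with $T(1),T(0)>0$ and $T(1)+T(0)=T$. For standard deviations $\sigma(1),\sigma(0)\ge 0$, not both zero, let $$V(T(1),T(0))=\frac{\sigma^2(1)}{T(1)}+\frac{\sigma^2(0)}{T(0)},\qquad V(T^*(1),T^*(0))=\frac{(\sigma(1)+\sigma(0))^2}{T}.$$ Then the optimal solution of $$\inf_{T(1),T(0)}\ \sup_{\sigma(1),\sigma(0)}\ \frac{V(T(1),T(0))}{V(T^*(1),T^*(0))}$$ is $T(1)=T(0)=T/2$. Moreover, $$\sup_{\sigma(1),\sigma(0)}\frac{V(T/2,T/2)}{V(T^*(1),T^*(0))}=2,$$ and this supremum is attained when either $\sigma(1)=0$ or $\sigma(0)=0$.
   Context: $\sigma(1),\sigma(0)$ are the standard deviations of the treated and control potential outcomes $Y(1),Y(0)$. $(T^*(1),T^*(0))=\big(\tfrac{\sigma(1)}{\sigma(1)+\sigma(0)}T,\tfrac{\sigma(0)}{\sigma(1)+\sigma(0)}T\big)$ is the Neyman allocation, which minimizes $V$ over allocations summing to $T$; its value is $(\sigma(1)+\sigma(0))^2/T$. The quantity $V$ is the variance of the difference-in-means estimator under a completely randomized experiment with $T(1)$ treated and $T(0)$ control subjects drawn from a super-population. *)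

theory Defs
  imports Complex_Main
begin

text \<open>Variance of difference-in-means with T1 treated and T0 control units.\<close>
definition V :: "real \<Rightarrow> real \<Rightarrow> real \<Rightarrow> real \<Rightarrow> real" where
  "V s1 s0 T1 T0 = s1^2 / T1 + s0^2 / T0"

text \<open>Variance under the Neyman allocation, total sample size T.\<close>
definition Vstar :: "real \<Rightarrow> real \<Rightarrow> real \<Rightarrow> real" where
  "Vstar s1 s0 T = (s1 + s0)^2 / T"

definition sigmas :: "(real \<times> real) set" where
  "sigmas = {(s1, s0). s1 \<ge> 0 \<and> s0 \<ge> 0 \<and> \<not> (s1 = 0 \<and> s0 = 0)}"

definition allocs :: "real \<Rightarrow> (real \<times> real) set" where
  "allocs T = {(T1, T0). T1 > 0 \<and> T0 > 0 \<and> T1 + T0 = T}"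

definition ratio :: "real \<Rightarrow> real \<Rightarrow> real \<Rightarrow> real \<Rightarrow> real \<Rightarrow> real" where
  "ratio T T1 T0 s1 s0 = V s1 s0 T1 T0 / Vstar s1 s0 T"

definition worst :: "real \<Rightarrow> real \<Rightarrow> real \<Rightarrow> real" where
  "worst T T1 T0 = (SUP p\<in>sigmas. ratio T T1 T0 (fst p) (snd p))"

end

theory Submission
  imports Defs
begin

text \<open>
  Writing \<open>M = max (T/T1) (T/T0)\<close>, the ratio equals
  \<open>((T/T1) s1\<^sup>2 + (T/T0) s0\<^sup>2) / (s1 + s0)\<^sup>2 \<le> M (s1\<^sup>2 + s0\<^sup>2) / (s1 + s0)\<^sup>2 \<le> M\<close>,
  since \<open>s1 s0 \<ge> 0\<close>; the bound is attained when one standard deviation vanishes.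
  So the worst case of an allocation is \<open>T\<close> divided by its smaller arm, which is
  at least \<open>T/(T/2) = 2\<close>, with equality exactly for the balanced allocation.
\<close>

lemma ratio_le_max:
  fixes T T1 T0 s1 s0 :: real
  assumes "T1 > 0" "T0 > 0" "T > 0" and "(s1, s0) \<in> sigmas"
  shows "ratio T T1 T0 s1 s0 \<le> max (T/T1) (T/T0)"
proof -
  define M where "M = max (T/T1) (T/T0)"
  from \<open>(s1, s0) \<in> sigmas\<close> have s: "s1 \<ge> 0" "s0 \<ge> 0" "s1 + s0 > 0"
    unfolding sigmas_def by auto
  have "M \<ge> 0"
    using assms unfolding M_def by (simp add: le_max_iff_disj)
  have "V s1 s0 T1 T0 * T = (T/T1) * s1^2 + (T/T0) * s0^2"
    unfolding V_def by (simp add: algebra_simps)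
  also have "\<dots> \<le> M * s1^2 + M * s0^2"
    unfolding M_def by (intro add_mono mult_right_mono) auto
  also have "\<dots> \<le> M * (s1 + s0)^2"
    using \<open>M \<ge> 0\<close> s by (simp add: power2_sum algebra_simps)
  finally have "V s1 s0 T1 T0 * T \<le> M * (s1 + s0)^2" .
  then show ?thesis
    using s unfolding ratio_def Vstar_def M_def by (simp add: divide_le_eq)
qed

lemma ratio_treated_only:
  fixes T T1 T0 s1 :: real
  assumes "s1 \<noteq> 0"
  shows "ratio T T1 T0 s1 0 = T / T1"
  using assms unfolding ratio_def V_def Vstar_def by simp

lemma ratio_control_only:
  fixes T T1 T0 s0 :: real
  assumes "s0 \<noteq> 0"
  shows "ratio T T1 T0 0 s0 = T / T0"
  using assms unfolding ratio_def V_def Vstar_def by simp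

lemma worst_eq_max:
  fixes T T1 T0 :: real
  assumes "T1 > 0" "T0 > 0" "T > 0"
  shows "worst T T1 T0 = max (T/T1) (T/T0)"
  unfolding worst_def
proof (rule cSup_eq_maximum)
  have "(1, 0) \<in> sigmas" "(0, 1) \<in> sigmas"
    unfolding sigmas_def by auto
  then show "max (T/T1) (T/T0) \<in> (\<lambda>p. ratio T T1 T0 (fst p) (snd p)) ` sigmas"
    using ratio_treated_only[of 1 T T1 T0] ratio_control_only[of 1 T T1 T0]
    by (cases "T/T1 \<le> T/T0") (force simp: max_def)+
next
  fix x
  assume "x \<in> (\<lambda>p. ratio T T1 T0 (fst p) (snd p)) ` sigmas"
  then show "x \<le> max (T/T1) (T/T0)"
    using ratio_le_max[OF assms] by auto
qed

lemma max_share_inverse_gt_two: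
  fixes T1 T0 :: real
  assumes "T1 > 0" "T0 > 0" "T1 \<noteq> T0"
  shows "2 < max ((T1 + T0) / T1) ((T1 + T0) / T0)"
proof (cases "T1 < T0")
  case True
  then have "2 < (T1 + T0) / T1"
    using assms by (simp add: less_divide_eq)
  then show ?thesis by simp
next
  case False
  then have "2 < (T1 + T0) / T0"
    using assms by (simp add: less_divide_eq)
  then show ?thesis by simp
qed

lemma worst_balanced:
  fixes T :: real
  assumes "T > 0"
  shows "worst T (T/2) (T/2) = 2"
  using worst_eq_max[of "T/2" "T/2" T] assms by simp

lemma worst_unbalanced:
  fixes T T1 T0 :: real
  assumes "(T1, T0) \<in> allocs T" "T1 \<noteq> T/2"
  shows "2 < worst T T1 T0"
proof -
  from assms have "T1 > 0" "T0 > 0" "T = T1 + T0" "T1 \<noteq> T0"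
    unfolding allocs_def by auto
  then show ?thesis
    using worst_eq_max max_share_inverse_gt_two by auto
qed

theorem theorem1:
  fixes T :: real
  assumes "T > 0"
  shows "(T/2, T/2) \<in> allocs T
    \<and> (\<forall>(T1, T0)\<in>allocs T. worst T (T/2) (T/2) \<le> worst T T1 T0)
    \<and> (\<forall>(T1, T0)\<in>allocs T. worst T T1 T0 \<le> worst T (T/2) (T/2) \<longrightarrow> T1 = T/2 \<and> T0 = T/2)
    \<and> worst T (T/2) (T/2) = 2
    \<and> (\<forall>(s1, s0)\<in>sigmas. (s1 = 0 \<or> s0 = 0) \<longrightarrow> ratio T (T/2) (T/2) s1 s0 = 2)"
proof -
  have balanced: "T1 = T/2 \<and> T0 = T/2" if "(T1, T0) \<in> allocs T" "T1 = T/2" for T1 T0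
    using that unfolding allocs_def by auto
  have attained: "ratio T (T/2) (T/2) s1 s0 = 2"
    if "(s1, s0) \<in> sigmas" "s1 = 0 \<or> s0 = 0" for s1 s0
    using that assms ratio_treated_only ratio_control_only unfolding sigmas_def by auto
  have optimal: "worst T (T/2) (T/2) \<le> worst T T1 T0"
    and unique: "worst T T1 T0 \<le> worst T (T/2) (T/2) \<Longrightarrow> T1 = T/2 \<and> T0 = T/2"
    if "(T1, T0) \<in> allocs T" for T1 T0
    using that worst_unbalanced[OF that] balanced[OF that] worst_balanced[OF assms]
    by (cases "T1 = T/2"; force)+
  have "(T/2, T/2) \<in> allocs T"
    using assms unfolding allocs_def by simp
  then show ?thesis
    using optimal unique worst_balanced[OF assms] attained by blast
qed

end
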